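(* For any infinite subset $A$ of an almost Clifford semigroup $S$, the set $AA=\{xy:x,y\in A\}$ is infinite.
   Context: The Clifford part $H(S)$ of a semigroup $S$ is the union of all subgroups of $S$; $S$ is almost Clifford if $S\setminus H(S)$ is finite. *)

theory Defs
  imports Main
begin

definition is_subgroup :: "'a::semigroup_mult set \<Rightarrow> bool" where
  "is_subgroup G \<longleftrightarrow>
     (\<forall>x\<in>G. \<forall>y\<in>G. x * y \<in> G) \<and>
     (\<exists>e\<in>G. (\<forall>g\<in>G. e * g = g \<and> g * e = g) \<and>
             (\<forall>g\<in>G. \<exists>h\<in>G. g * h = e \<and> h * g = e))"

definition clifford_part :: "'a::semigroup_mult set" where
  "clifford_part = \<Union> {G. is_subgroup G}"

definition almost_clifford :: "'a::semigroup_mult itself \<Rightarrow> bool" where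
  "almost_clifford _ \<longleftrightarrow> finite (UNIV - (clifford_part :: 'a set))"

end

theory Submission
  imports Defs
begin

text \<open>Since all but finitely many elements of an infinite set A lie in the Clifford part,
  and squaring maps them into the finite set AA, infinitely many of them have one and the
  same square c. Two subgroups containing c share their identity, so all these elements
  lie in groups with a common identity e; hence left multiplication by any one of them is
  injective on the others, and the products it yields are infinitely many elements of AA.\<close>

lemma group_identities_eq_if_common_element:
  fixes c :: "'a::semigroup_mult"
  assumes "e \<in> G" "\<forall>g\<in>G. e * g = g \<and> g * e = g" "\<forall>g\<in>G. \<exists>h\<in>G. g * h = e \<and> h * g = e"
    and "f \<in> K" "\<forall>g\<in>K. f * g = g \<and> g * f = g" "\<forall>g\<in>K. \<exists>h\<in>K. g * h = f \<and> h * g = f"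
    and "c \<in> G" "c \<in> K"
  shows "e = f"
proof -
  obtain h where h: "h \<in> G" "h * c = e" using assms by blast
  obtain d where d: "d \<in> K" "c * d = f" using assms by blast
  have "e * f = h * (c * f)" using h by (simp add: mult.assoc[symmetric])
  also have "\<dots> = e" using assms h by simp
  finally have "e * f = e" .
  moreover have "e * f = (e * c) * d" using d by (simp add: mult.assoc)
  moreover have "\<dots> = f" using assms d by simp
  ultimately show ?thesis by simp
qed

lemma clifford_partE:
  assumes "(x::'a::semigroup_mult) \<in> clifford_part"
  obtains G e where "x \<in> G" "\<forall>x\<in>G. \<forall>y\<in>G. x * y \<in> G" "e \<in> G"
    "\<forall>g\<in>G. e * g = g \<and> g * e = g" "\<forall>g\<in>G. \<exists>h\<in>G. g * h = e \<and> h * g = e"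
  using assms unfolding clifford_part_def is_subgroup_def by blast

lemma clifford_part_equal_squares_common_identity:
  fixes a :: "'a::semigroup_mult"
  assumes "a \<in> clifford_part"
  obtains e a' where "a' * a = e" "\<And>y. y \<in> clifford_part \<Longrightarrow> y * y = a * a \<Longrightarrow> e * y = y"
proof -
  obtain G e where G: "a \<in> G" "\<forall>x\<in>G. \<forall>y\<in>G. x * y \<in> G" "e \<in> G"
    "\<forall>g\<in>G. e * g = g \<and> g * e = g" "\<forall>g\<in>G. \<exists>h\<in>G. g * h = e \<and> h * g = e"
    using assms by (rule clifford_partE)
  obtain a' where "a' * a = e" using G by blast
  moreover have "e * y = y" if "y \<in> clifford_part" "y * y = a * a" for y
  proof -
    obtain K f where K: "y \<in> K" "\<forall>x\<in>K. \<forall>y\<in>K. x * y \<in> K" "f \<in> K"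
      "\<forall>g\<in>K. f * g = g \<and> g * f = g" "\<forall>g\<in>K. \<exists>h\<in>K. g * h = f \<and> h * g = f"
      using \<open>y \<in> clifford_part\<close> by (rule clifford_partE)
    have "a * a \<in> G" "a * a \<in> K" using G K \<open>y * y = a * a\<close> by metis+
    then have "e = f" using group_identities_eq_if_common_element[OF G(3-5) K(3-5)] by blast
    then show ?thesis using K by simp
  qed
  ultimately show ?thesis using that by blast
qed

lemma inj_on_mult_left_equal_squares:
  fixes a :: "'a::semigroup_mult"
  assumes "a \<in> clifford_part"
  shows "inj_on ((*) a) {y \<in> clifford_part. y * y = a * a}"
proof (rule inj_onI)
  obtain e a' where a': "a' * a = e"
    and e: "\<And>y. y \<in> clifford_part \<Longrightarrow> y * y = a * a \<Longrightarrow> e * y = y"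
    using clifford_part_equal_squares_common_identity[OF assms] by blast
  fix y z assume "y \<in> {y \<in> clifford_part. y * y = a * a}" "z \<in> {y \<in> clifford_part. y * y = a * a}"
    and "a * y = a * z"
  then have "e * y = e * z" using a' by (metis mult.assoc)
  then show "y = z" using e \<open>y \<in> _\<close> \<open>z \<in> _\<close> by simp
qed

theorem mainTheorem20:
  fixes A :: "'a::semigroup_mult set"
  assumes "almost_clifford TYPE('a)"
    and "infinite A"
  shows "infinite {x * y | x y. x \<in> A \<and> y \<in> A}"
proof
  let ?AA = "{x * y | x y. x \<in> A \<and> y \<in> A}"
  let ?B = "A \<inter> clifford_part"
  assume fin: "finite ?AA"
  have "finite (A - clifford_part)"
    using assms(1) unfolding almost_clifford_def by (rule finite_subset[rotated]) auto
  then have "infinite ?B" using assms(2) by (metis Int_Diff_Un finite_UnI)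
  moreover have "finite ((\<lambda>x. x * x) ` ?B)" using fin by (rule finite_subset[rotated]) blast
  ultimately obtain a where a: "a \<in> ?B" and infF: "infinite {y \<in> ?B. y * y = a * a}"
    using pigeonhole_infinite by blast
  let ?F = "{y \<in> ?B. y * y = a * a}"
  have "inj_on ((*) a) ?F"
    using a by (intro inj_on_subset[OF inj_on_mult_left_equal_squares]) auto
  then have "infinite ((*) a ` ?F)" using infF finite_imageD by blast
  moreover have "(*) a ` ?F \<subseteq> ?AA" using a by blast
  ultimately show False using fin finite_subset by blast
qed

end
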